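(* Let $X$ be a finite dimensional real or complex Banach space and let $\eta$ be an admissible probability measure on $S_{X^*}$. Then there is a point $x_0\in S_X$, depending on $\eta$, such that $$\mathbf c(X)\ge \exp\left\{-\int_{S_{X^*}}\log|\langle x_0,\psi\rangle|\,d\eta(\psi)\right\}.$$
   Context: For a Banach space $Y$, $B_Y$ and $S_Y$ denote its closed unit ball and unit sphere. For a Banach space $X$ over $\mathbb K\in\{\mathbb R,\mathbb C\}$ and $n\in\mathbb N$, $\mathbf c_n(X)$ is the smallest constant such that for all $\psi_1,\dots,\psi_n\in X^*$, $\|\psi_1\|\cdots\|\psi_n\|\le \mathbf c_n(X)\,\|\psi_1\cdots\psi_n\|$, where $\psi_1\cdots\psi_n$ is the pointwise product and $\|P\|=\sup_{x\in S_X}|P(x)|$; $\mathbf c(X)=\lim_{n\to\infty}\mathbf c_n(X)^{1/n}$ (this limit exists). Admissibility: for a Banach space $Y$, a Borel set $K\subseteq B_Y$ and a Borel measure $\lambda$ on $K$, $\lambda$ is admissible if $\int_K\log|\langle y,\varphi\rangle|\,d\lambda(y)$ is finite for every $\varphi\in S_{Y^*}$ and $g_m(\varphi)=\int_K\max\{\log|\langle y,\varphi\rangle|,-m\}\,d\lambda(y)$ converges uniformly on $S_{Y^*}$ as $m\to\infty$ to $g(\varphi)=\int_K\log|\langle y,\varphi\rangle|\,d\lambda(y)$. Here it is applied with $Y=X^*$, $K=S_{X^*}$, $Y^*=X$. *)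

theory Defs
  imports "HOL-Probability.Probability"
begin

text \<open>The n-dimensional Banach space X over K (K = real or complex) is modelled as
  K^n (type 'k^'n) equipped with an arbitrary norm N. Its dual X* is identified with
  K^n via the pairing below (every K-linear functional on K^n is of this form).\<close>

definition pair :: "'k::real_normed_field^'n \<Rightarrow> 'k^'n \<Rightarrow> 'k" where
  "pair x \<psi> = (\<Sum>i\<in>UNIV. x $ i * \<psi> $ i)"

definition is_norm :: "('k::real_normed_field^'n \<Rightarrow> real) \<Rightarrow> bool" where
  "is_norm N \<longleftrightarrow> (\<forall>x. N x = 0 \<longleftrightarrow> x = 0) \<and> (\<forall>c x. N (c *s x) = norm c * N x)
     \<and> (\<forall>x y. N (x + y) \<le> N x + N y)"

definition sphere_N :: "('k::real_normed_field^'n \<Rightarrow> real) \<Rightarrow> ('k^'n) set" where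
  "sphere_N N = {x. N x = 1}"

definition dual_norm :: "('k::real_normed_field^'n \<Rightarrow> real) \<Rightarrow> 'k^'n \<Rightarrow> real" where
  "dual_norm N \<psi> = (SUP x\<in>sphere_N N. norm (pair x \<psi>))"

definition dual_sphere :: "('k::real_normed_field^'n \<Rightarrow> real) \<Rightarrow> ('k^'n) set" where
  "dual_sphere N = {\<psi>. dual_norm N \<psi> = 1}"

definition prod_norm :: "('k::real_normed_field^'n \<Rightarrow> real) \<Rightarrow> nat \<Rightarrow> (nat \<Rightarrow> 'k^'n) \<Rightarrow> real" where
  "prod_norm N n \<psi> = (SUP x\<in>sphere_N N. norm (\<Prod>i<n. pair x (\<psi> i)))"

definition c_n :: "('k::real_normed_field^'n \<Rightarrow> real) \<Rightarrow> nat \<Rightarrow> real" where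
  "c_n N n = Inf {C. \<forall>\<psi>::nat \<Rightarrow> 'k^'n. (\<Prod>i<n. dual_norm N (\<psi> i)) \<le> C * prod_norm N n \<psi>}"

definition c_X :: "('k::real_normed_field^'n \<Rightarrow> real) \<Rightarrow> real" where
  "c_X N = lim (\<lambda>n. root n (c_n N n))"

text \<open>Admissibility (with Y = X*, K = S_{X*}, Y* = X). Finiteness of the integral of
  log|<x,psi>| (log 0 = -infinity) is expressed as: the pairing is a.e. nonzero and
  the (real-valued) function is integrable.\<close>
definition admissible :: "('k::real_normed_field^'n \<Rightarrow> real) \<Rightarrow> ('k^'n) measure \<Rightarrow> bool" where
  "admissible N \<eta> \<longleftrightarrow>
     (\<forall>x\<in>sphere_N N. (AE \<psi> in \<eta>. pair x \<psi> \<noteq> 0) \<and> integrable \<eta> (\<lambda>\<psi>. ln (norm (pair x \<psi>))))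
   \<and> uniform_limit (sphere_N N)
       (\<lambda>m x. \<integral>\<psi>. max (ln (norm (pair x \<psi>))) (- real m) \<partial>\<eta>)
       (\<lambda>x. \<integral>\<psi>. ln (norm (pair x \<psi>)) \<partial>\<eta>) sequentially"

definition prob_on_dual_sphere :: "('k::real_normed_field^'n \<Rightarrow> real) \<Rightarrow> ('k^'n) measure \<Rightarrow> bool" where
  "prob_on_dual_sphere N \<eta> \<longleftrightarrow> prob_space \<eta> \<and> space \<eta> = dual_sphere N
     \<and> sets \<eta> = sets (restrict_space borel (dual_sphere N))"

end

theory Submission
  imports Defs "HOL-Computational_Algebra.Polynomial"
begin

text \<open>Choose \<open>x\<^sub>0\<close> maximising \<open>g x = \<integral>\<psi>. ln \<bar>\<langle>x, \<psi>\<rangle>\<bar> \<partial>\<eta>\<close> on the compact sphere \<open>S\<^sub>X\<close>;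
  \<open>g\<close> is continuous as the uniform limit of its Lipschitz truncations \<open>g\<^sub>m\<close>. Sampling
  \<open>\<psi>\<^sub>1, \<dots>, \<psi>\<^sub>k\<close> from \<open>\<eta>\<close> so that the empirical means of the truncated logarithms are,
  uniformly on a finite net of \<open>S\<^sub>X\<close>, within \<open>\<epsilon>\<close> of their expectations gives
  \<open>\<parallel>\<psi>\<^sub>1 \<cdots> \<psi>\<^sub>k\<parallel> \<le> exp (k (g x\<^sub>0 + \<epsilon>))\<close> with all \<open>\<parallel>\<psi>\<^sub>i\<parallel> = 1\<close>, hence
  \<open>c\<^sub>k \<ge> exp (- k (g x\<^sub>0 + \<epsilon>))\<close>. As \<open>ln c\<^sub>k\<close> is superadditive and at most linear, Fekete's
  lemma yields \<open>c(X) = sup\<^sub>k c\<^sub>k\<^bsup>1/k\<^esup> \<ge> exp (- g x\<^sub>0)\<close>.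

  The linear bound on \<open>ln c\<^sub>k\<close> comes from choosing a point of the cube \<open>[-1,1]\<^sup>n\<close> one
  coordinate at a time, using that a product of affine functions \<open>\<alpha>\<^sub>i + t \<beta>\<^sub>i\<close>, \<open>i \<in> I\<close>,
  is at least \<open>(1/2)\<^bsup>card I\<^esup> \<Prod>\<^sub>i max \<bar>\<alpha>\<^sub>i\<bar> \<bar>\<beta>\<^sub>i\<bar>\<close> somewhere on \<open>[-1,1]\<close>.
  Writing \<open>t = Re w\<close> with \<open>\<bar>w\<bar> = 1\<close>, each factor is the modulus of a quadratic in \<open>w\<close>,
  and a complex polynomial attains the modulus of its leading coefficient on the unit circle.\<close>

lemma pair_scale: "pair (c *s x) \<psi> = c * pair x \<psi>"
  by (simp add: pair_def sum_distrib_left mult.assoc)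

lemma pair_add: "pair (x + y) \<psi> = pair x \<psi> + pair y \<psi>"
  by (simp add: pair_def distrib_right sum.distrib)

lemma pair_diff: "pair (x - y) \<psi> = pair x \<psi> - pair y \<psi>"
  by (simp add: pair_def left_diff_distrib sum_subtractf)

lemma pair_0_left [simp]: "pair 0 \<psi> = 0"
  by (simp add: pair_def)

lemma pair_axis_left: "pair (axis k 1) \<psi> = \<psi> $ k"
proof -
  have "pair (axis k 1) \<psi> = (\<Sum>j\<in>UNIV. if j = k then \<psi> $ j else 0)"
    unfolding pair_def by (intro sum.cong refl) (simp add: axis_def)
  then show ?thesis by simp
qed

lemma pair_axis_right: "pair x (axis k 1) = x $ k"
proof -
  have "pair x (axis k 1) = (\<Sum>j\<in>UNIV. if j = k then x $ j else 0)"
    unfolding pair_def by (intro sum.cong refl) (simp add: axis_def)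
  then show ?thesis by simp
qed

lemma of_real_scalar_mult: "(of_real r :: 'k::real_normed_field) *s (x::'k^'n) = r *\<^sub>R x"
  by (simp add: vec_eq_iff of_real_def)

definition coord_max :: "'n set \<Rightarrow> 'k::real_normed_field^'n \<Rightarrow> real" where
  "coord_max J \<psi> = Max (insert 0 ((\<lambda>j. norm (\<psi> $ j)) ` J))"

lemma coord_max_nonneg: "coord_max J \<psi> \<ge> 0"
  unfolding coord_max_def by (rule Max_ge) auto

lemma coord_max_empty [simp]: "coord_max {} \<psi> = 0"
  by (simp add: coord_max_def)

lemma coord_max_insert: "coord_max (insert k J) \<psi> = max (coord_max J \<psi>) (norm (\<psi> $ k))"
proof -
  have "insert 0 ((\<lambda>j. norm (\<psi> $ j)) ` insert k J) = insert (norm (\<psi> $ k)) (insert 0 ((\<lambda>j. norm (\<psi> $ j)) ` J))"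
    by auto
  then show ?thesis unfolding coord_max_def by (simp add: max.commute)
qed

lemma norm_nth_le_coord_max: "norm (\<psi> $ j) \<le> coord_max UNIV \<psi>"
  unfolding coord_max_def by (rule Max_ge) auto

lemma prod_lessThan_add: "(\<Prod>i<n + m. f i) = (\<Prod>i<n. f i) * (\<Prod>i<m. f (i + n))"
  for f :: "nat \<Rightarrow> 'a::comm_monoid_mult"
  by (induction m) (simp_all add: ac_simps)

locale vec_norm =
  fixes N :: "'k::{real_normed_field,heine_borel}^'n \<Rightarrow> real"
  assumes is_norm: "is_norm N"
begin

abbreviation S where "S \<equiv> sphere_N N"

lemma N_eq_0_iff: "N x = 0 \<longleftrightarrow> x = 0"
  using is_norm by (simp add: is_norm_def)

lemma N_scale: "N (c *s x) = norm c * N x"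
  using is_norm by (simp add: is_norm_def)

lemma N_triangle: "N (x + y) \<le> N x + N y"
  using is_norm by (simp add: is_norm_def)

lemma N_0 [simp]: "N 0 = 0"
  using N_eq_0_iff by simp

lemma N_minus: "N (- x) = N x"
proof -
  have "- x = (-1) *s x" by (simp add: vec_eq_iff)
  then show ?thesis using N_scale[of "-1" x] by simp
qed

lemma N_nonneg: "N x \<ge> 0"
  using N_triangle[of x "- x"] by (simp add: N_minus)

lemma N_pos: "x \<noteq> 0 \<Longrightarrow> N x > 0"
  using N_nonneg N_eq_0_iff by (metis less_eq_real_def)

lemma N_diff_le: "\<bar>N x - N y\<bar> \<le> N (x - y)"
  using N_triangle[of "x - y" y] N_triangle[of "y - x" x] N_minus[of "x - y"] by auto

lemma N_sum_le: "finite A \<Longrightarrow> N (\<Sum>i\<in>A. f i) \<le> (\<Sum>i\<in>A. N (f i))"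
proof (induction A rule: finite_induct)
  case (insert a A)
  then show ?case using N_triangle[of "f a" "sum f A"] by simp
qed simp

lemma N_le_coord_sum: "N x \<le> (\<Sum>j\<in>UNIV. norm (x $ j) * N (axis j 1))"
proof -
  have "N x = N (\<Sum>j\<in>UNIV. (x $ j) *s axis j 1)" by (simp add: basis_expansion)
  also have "\<dots> \<le> (\<Sum>j\<in>UNIV. N ((x $ j) *s axis j 1))" by (rule N_sum_le) simp
  finally show ?thesis by (simp add: N_scale)
qed

lemma N_cube_le: "(\<And>j. \<bar>t j\<bar> \<le> 1) \<Longrightarrow> N (\<chi> j. of_real (t j)) \<le> (\<Sum>j\<in>UNIV. N (axis j 1))"
  by (rule order_trans[OF N_le_coord_sum]) (auto intro!: sum_mono mult_left_le_one_le N_nonneg)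

lemma N_le_norm: "\<exists>A>0. \<forall>x. N x \<le> A * norm x"
proof -
  define A where "A = (\<Sum>j\<in>UNIV. N (axis j 1)) + 1"
  have A: "A > 0" unfolding A_def by (simp add: add_nonneg_pos sum_nonneg N_nonneg)
  have "N x \<le> A * norm x" for x
  proof -
    have "N x \<le> (\<Sum>j\<in>UNIV. norm x * N (axis j 1))"
      by (rule order_trans[OF N_le_coord_sum]) (intro sum_mono mult_right_mono Finite_Cartesian_Product.norm_nth_le N_nonneg)
    also have "\<dots> \<le> A * norm x" by (simp add: A_def sum_distrib_left[symmetric] algebra_simps)
    finally show ?thesis .
  qed
  then show ?thesis using A by blast
qed

lemma continuous_on_N: "continuous_on A N"
proof -
  obtain L where L: "L > 0" "\<And>x. N x \<le> L * norm x" using N_le_norm by blast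
  have "lipschitz_on L A N"
  proof (rule lipschitz_onI)
    fix x y
    show "dist (N x) (N y) \<le> L * dist x y"
      using N_diff_le[of x y] L(2)[of "x - y"] by (simp add: dist_real_def dist_norm)
  qed (use L in simp)
  then show ?thesis by (rule lipschitz_on_continuous_on)
qed

lemma norm_le_N: "\<exists>B>0. \<forall>x. norm x \<le> B * N x"
proof -
  have "sphere (0::'k^'n) 1 \<noteq> {}" by simp
  then obtain z where z: "z \<in> sphere 0 1" and z_min: "\<And>y. y \<in> sphere 0 1 \<Longrightarrow> N z \<le> N y"
    using continuous_attains_inf[OF compact_sphere _ continuous_on_N] by blast
  have Nz: "N z > 0" using z by (intro N_pos) auto
  have "norm x \<le> (1 / N z) * N x" for x
  proof (cases "x = 0")
    case False
    have "norm (of_real (1 / norm x) *s x) = 1" using False by (simp only: of_real_scalar_mult) simp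
    then have "N z \<le> N (of_real (1 / norm x) *s x)" by (intro z_min) simp
    also have "\<dots> = N x / norm x" by (simp add: N_scale norm_divide)
    finally show ?thesis using False Nz by (simp add: field_simps)
  qed simp
  then show ?thesis using Nz by (intro exI[of _ "1 / N z"]) auto
qed

lemma sphere_N_nonempty: "S \<noteq> {}"
proof -
  obtain j :: 'n where True by simp
  have "axis j (1::'k) \<noteq> 0" by (simp add: axis_eq_0_iff)
  then have "N (axis j (1::'k)) > 0" by (rule N_pos)
  then have "N (of_real (1 / N (axis j 1)) *s axis j (1::'k)) = 1" by (simp add: N_scale norm_divide)
  then show ?thesis by (auto simp: sphere_N_def)
qed

lemma normalized_in_sphere_N:
  assumes "z \<noteq> 0"
  shows "of_real (1 / N z) *s z \<in> S" and "z = of_real (N z) *s (of_real (1 / N z) *s z)"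
proof -
  have "N z > 0" using assms by (rule N_pos)
  then show "of_real (1 / N z) *s z \<in> S" and "z = of_real (N z) *s (of_real (1 / N z) *s z)"
    by (simp_all add: sphere_N_def N_scale norm_divide vec_eq_iff)
qed

lemma compact_sphere_N: "compact S"
proof (rule compact_eq_bounded_closed[THEN iffD2], rule conjI)
  obtain B where B: "B > 0" "\<And>x. norm x \<le> B * N x" using norm_le_N by blast
  then show "bounded S"
    unfolding bounded_iff sphere_N_def by (intro exI[of _ B]) (metis mem_Collect_eq mult.right_neutral)
  have "closed (N -` {1})" by (rule closed_vimage) (auto intro: continuous_on_N)
  then show "closed S" by (simp add: sphere_N_def vimage_def)
qed

lemma pair_le_N_coord_max: "\<exists>K>0. \<forall>x \<psi>. norm (pair x \<psi>) \<le> K * N x * coord_max UNIV \<psi>"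
proof -
  obtain B where B: "B > 0" "\<And>x. norm x \<le> B * N x" using norm_le_N by blast
  have "norm (pair x \<psi>) \<le> (real CARD('n) * B) * N x * coord_max UNIV \<psi>" for x \<psi>
  proof -
    have "norm (pair x \<psi>) \<le> (\<Sum>j\<in>UNIV. norm (x $ j * \<psi> $ j))"
      unfolding pair_def by (rule norm_sum)
    also have "\<dots> \<le> (\<Sum>j\<in>(UNIV::'n set). (B * N x) * coord_max UNIV \<psi>)"
      unfolding norm_mult
      by (intro sum_mono mult_mono order_trans[OF Finite_Cartesian_Product.norm_nth_le B(2)] norm_nth_le_coord_max)
         (auto intro: mult_nonneg_nonneg N_nonneg less_imp_le[OF B(1)])
    finally show ?thesis by (simp add: algebra_simps)
  qed
  then show ?thesis using B(1) by (intro exI[of _ "real CARD('n) * B"]) auto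
qed

lemma bdd_above_pair_sphere_N: "bdd_above ((\<lambda>x. norm (pair x \<psi>)) ` S)"
proof -
  obtain K where K: "K > 0" "\<And>x \<psi>. norm (pair x \<psi>) \<le> K * N x * coord_max UNIV \<psi>"
    using pair_le_N_coord_max by blast
  have "norm (pair x \<psi>) \<le> K * coord_max UNIV \<psi>" if "x \<in> S" for x
    using that K(2)[of x \<psi>] by (simp add: sphere_N_def)
  then show ?thesis by (intro bdd_aboveI) auto
qed

lemma pair_le_dual_norm: "x \<in> S \<Longrightarrow> norm (pair x \<psi>) \<le> dual_norm N \<psi>"
  unfolding dual_norm_def by (rule cSUP_upper[OF _ bdd_above_pair_sphere_N])

lemma dual_norm_nonneg: "dual_norm N \<psi> \<ge> 0"
  using sphere_N_nonempty pair_le_dual_norm norm_ge_zero by (meson ex_in_conv order_trans)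

lemma dual_norm_le_coord_max: "\<exists>K>0. \<forall>\<psi>. dual_norm N \<psi> \<le> K * coord_max UNIV \<psi>"
proof -
  obtain K where K: "K > 0" "\<And>x \<psi>. norm (pair x \<psi>) \<le> K * N x * coord_max UNIV \<psi>"
    using pair_le_N_coord_max by blast
  have "dual_norm N \<psi> \<le> K * coord_max UNIV \<psi>" for \<psi>
  proof (unfold dual_norm_def, rule cSUP_least[OF sphere_N_nonempty])
    fix x assume "x \<in> S"
    then show "norm (pair x \<psi>) \<le> K * coord_max UNIV \<psi>"
      using K(2)[of x \<psi>] by (simp add: sphere_N_def)
  qed
  then show ?thesis using K(1) by blast
qed

lemma pair_le_dual_norm_N: "norm (pair z \<psi>) \<le> dual_norm N \<psi> * N z"
proof (cases "z = 0")
  case False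
  define y where "y = of_real (1 / N z) *s z"
  have y: "y \<in> S" "z = of_real (N z) *s y" using normalized_in_sphere_N[OF False] by (simp_all add: y_def)
  have "norm (pair z \<psi>) = N z * norm (pair y \<psi>)"
    by (subst y(2)) (simp add: pair_scale norm_mult N_nonneg)
  also have "\<dots> \<le> N z * dual_norm N \<psi>" by (intro mult_left_mono pair_le_dual_norm y N_nonneg)
  finally show ?thesis by (simp add: mult.commute)
qed simp

lemma exists_dual_norm_pos: "\<exists>\<psi>. dual_norm N \<psi> > 0"
proof -
  obtain x where x: "x \<in> S" using sphere_N_nonempty by blast
  then have "x \<noteq> 0" by (auto simp: sphere_N_def)
  then obtain j where "x $ j \<noteq> 0" by (auto simp: vec_eq_iff)
  then have "0 < norm (pair x (axis j 1))" by (simp add: pair_axis_right)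
  also have "\<dots> \<le> dual_norm N (axis j 1)" by (rule pair_le_dual_norm[OF x])
  finally show ?thesis by blast
qed

lemma norm_prod_pair_le_prod_dual_norm:
  "x \<in> S \<Longrightarrow> norm (\<Prod>i<n. pair x (\<psi> i)) \<le> (\<Prod>i<n. dual_norm N (\<psi> i))"
  by (simp add: prod_norm[symmetric] prod_mono pair_le_dual_norm)

lemma norm_prod_pair_le_prod_norm: "x \<in> S \<Longrightarrow> norm (\<Prod>i<n. pair x (\<psi> i)) \<le> prod_norm N n \<psi>"
  unfolding prod_norm_def
  by (rule cSUP_upper) (auto intro!: bdd_aboveI norm_prod_pair_le_prod_dual_norm)

lemma prod_norm_nonneg: "prod_norm N n \<psi> \<ge> 0"
  using sphere_N_nonempty norm_prod_pair_le_prod_norm norm_ge_zero by (meson ex_in_conv order_trans)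

lemma prod_norm_le: "(\<And>x. x \<in> S \<Longrightarrow> norm (\<Prod>i<n. pair x (\<psi> i)) \<le> B) \<Longrightarrow> prod_norm N n \<psi> \<le> B"
  unfolding prod_norm_def using sphere_N_nonempty by (intro cSUP_least) auto

lemma prod_norm_le_prod_dual_norm: "prod_norm N n \<psi> \<le> (\<Prod>i<n. dual_norm N (\<psi> i))"
  by (intro prod_norm_le norm_prod_pair_le_prod_dual_norm)

lemma prod_norm_append:
  "prod_norm N (n + m) (\<lambda>i. if i < n then \<psi> i else \<phi> (i - n)) \<le> prod_norm N n \<psi> * prod_norm N m \<phi>"
proof (rule prod_norm_le)
  fix x assume x: "x \<in> S"
  have "norm (\<Prod>i<n + m. pair x (if i < n then \<psi> i else \<phi> (i - n)))
      = norm (\<Prod>i<n. pair x (\<psi> i)) * norm (\<Prod>i<m. pair x (\<phi> i))"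
    by (simp add: prod_lessThan_add norm_mult)
  also have "\<dots> \<le> prod_norm N n \<psi> * prod_norm N m \<phi>"
    by (intro mult_mono norm_prod_pair_le_prod_norm x prod_norm_nonneg norm_ge_zero)
  finally show "norm (\<Prod>i<n + m. pair x (if i < n then \<psi> i else \<phi> (i - n))) \<le> \<dots>" .
qed

lemma prod_pair_le_power_prod_norm:
  assumes "N x \<le> A"
  shows "(\<Prod>i<n. norm (pair x (\<psi> i))) \<le> A ^ n * prod_norm N n \<psi>"
proof (cases "x = 0")
  case True
  have A: "A \<ge> 0" using assms N_nonneg[of x] by linarith
  show ?thesis
  proof (cases n)
    case 0
    obtain z where "z \<in> S" using sphere_N_nonempty by blast
    then show ?thesis using norm_prod_pair_le_prod_norm[where n=0] 0 by simp
  next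
    case (Suc m)
    then show ?thesis using True A by (simp add: mult_nonneg_nonneg prod_norm_nonneg)
  qed
next
  case False
  define y where "y = of_real (1 / N x) *s x"
  have y: "y \<in> S" "x = of_real (N x) *s y" using normalized_in_sphere_N[OF False] by (simp_all add: y_def)
  have "(\<Prod>i<n. norm (pair x (\<psi> i))) = N x ^ n * norm (\<Prod>i<n. pair y (\<psi> i))"
    by (subst y(2)) (simp add: pair_scale norm_mult prod.distrib N_nonneg prod_norm[symmetric])
  also have "\<dots> \<le> A ^ n * prod_norm N n \<psi>"
    by (intro mult_mono power_mono assms N_nonneg norm_prod_pair_le_prod_norm y(1) zero_le_power)
       (use assms N_nonneg[of x] in auto)
  finally show ?thesis .
qed

end

lemma sum_powers_root_of_unity:
  assumes "0 < m" "m \<le> M"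
  shows "(\<Sum>k<M. (cis (2 * pi / real M) ^ m) ^ k) = (if m = M then of_nat M else 0)"
proof -
  define \<omega> where "\<omega> = cis (2 * pi / real M) ^ m"
  have M: "real M > 0" using assms by simp
  have \<omega>: "\<omega> = cis (2 * pi * (real m / real M))"
    unfolding \<omega>_def Complex.DeMoivre by (simp add: field_simps)
  have "\<omega> ^ M = cis (2 * pi * real m)"
    using M unfolding \<omega> Complex.DeMoivre by (simp add: field_simps)
  then have \<omega>_M: "\<omega> ^ M = 1" by simp
  show ?thesis
  proof (cases "m = M")
    case True
    then have "\<omega> = 1" using M by (simp add: \<omega>)
    then show ?thesis using True by (simp add: \<omega>_def)
  next
    case False
    have "\<omega> \<noteq> 1"
    proof
      assume "\<omega> = 1"
      then have "cos (2 * pi * (real m / real M)) = 1"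
        by (metis \<omega> cis.sel(1) one_complex.sel(1))
      then obtain k :: int where "2 * pi * (real m / real M) = k * 2 * pi"
        by (auto simp: cos_one_2pi_int)
      then have "(2 * pi) * (real m / real M) = (2 * pi) * k" by (simp add: ac_simps)
      then have "real m / real M = k" by (subst (asm) mult_left_cancel) auto
      moreover have "0 < real m / real M" "real m / real M < 1" using assms False M by auto
      ultimately have "0 < k" "k < 1" by simp_all
      then show False by simp
    qed
    then show ?thesis using False \<omega>_M by (simp add: sum_gp_strict \<omega>_def)
  qed
qed

lemma sum_poly_roots_of_unity:
  fixes P :: "complex poly"
  defines "M \<equiv> Suc (degree P)"
  defines "\<omega> \<equiv> cis (2 * pi / real M)"
  shows "(\<Sum>k<M. poly P (\<omega> ^ k) * \<omega> ^ k) = of_nat M * lead_coeff P"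
proof -
  have "(\<Sum>k<M. poly P (\<omega> ^ k) * \<omega> ^ k) = (\<Sum>k<M. \<Sum>j\<le>degree P. coeff P j * (\<omega> ^ Suc j) ^ k)"
  proof (intro sum.cong refl)
    fix k
    have "(\<omega> ^ k) ^ j * \<omega> ^ k = (\<omega> ^ Suc j) ^ k" for j
      by (metis power_Suc2 power_mult mult.commute)
    then show "poly P (\<omega> ^ k) * \<omega> ^ k = (\<Sum>j\<le>degree P. coeff P j * (\<omega> ^ Suc j) ^ k)"
      by (simp add: poly_altdef sum_distrib_right mult.assoc)
  qed
  also have "\<dots> = (\<Sum>j\<le>degree P. coeff P j * (\<Sum>k<M. (\<omega> ^ Suc j) ^ k))"
    by (subst sum.swap) (simp add: sum_distrib_left)
  also have "\<dots> = (\<Sum>j\<le>degree P. if j = degree P then coeff P j * of_nat M else 0)"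
  proof (intro sum.cong refl)
    fix j assume "j \<in> {..degree P}"
    then have "(\<Sum>k<M. (\<omega> ^ Suc j) ^ k) = (if Suc j = M then of_nat M else 0)"
      unfolding \<omega>_def M_def by (intro sum_powers_root_of_unity) auto
    then show "coeff P j * (\<Sum>k<M. (\<omega> ^ Suc j) ^ k) = (if j = degree P then coeff P j * of_nat M else 0)"
      by (simp add: M_def del: power_Suc)
  qed
  finally show ?thesis by simp
qed

lemma exists_unit_circle_lead_coeff_le_poly:
  fixes P :: "complex poly"
  shows "\<exists>w. norm w = 1 \<and> norm (lead_coeff P) \<le> norm (poly P w)"
proof (rule ccontr)
  define M where "M = Suc (degree P)"
  define \<omega> where "\<omega> = cis (2 * pi / real M)"
  assume "\<not> ?thesis"
  then have less: "norm (poly P (\<omega> ^ k)) < norm (lead_coeff P)" for k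
    by (metis \<omega>_def norm_cis norm_power power_one not_le)
  have "(\<Sum>k<M. poly P (\<omega> ^ k) * \<omega> ^ k) = of_nat M * lead_coeff P"
    unfolding M_def \<omega>_def by (rule sum_poly_roots_of_unity)
  then have "real M * norm (lead_coeff P) = norm (\<Sum>k<M. poly P (\<omega> ^ k) * \<omega> ^ k)"
    by (simp add: norm_mult)
  also have "\<dots> \<le> (\<Sum>k<M. norm (poly P (\<omega> ^ k)))"
    by (rule order_trans[OF norm_sum]) (simp add: norm_mult \<omega>_def norm_power)
  also have "\<dots> < (\<Sum>k<M. norm (lead_coeff P))"
    by (rule sum_strict_mono) (auto simp: M_def less)
  finally show False by simp
qed

lemma norm_affine_Re_unit_circle: "norm w = 1 \<Longrightarrow> norm (a + of_real (Re w) * b) = norm ((b/2) * w^2 + a * w + b/2)"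
proof -
  assume w: "norm w = 1"
  then have wc: "w * cnj w = 1"
    by (metis complex_norm_square mult.commute of_real_1 power_one)
  have re: "of_real (Re w) = (w + cnj w) / 2" by (simp add: complex_add_cnj)
  have "w * (a + (w + cnj w) / 2 * b) = a*w + b/2 * w^2 + b/2 * (w * cnj w)"
    by (simp add: algebra_simps power2_eq_square add_divide_distrib)
  then have "(b/2) * w^2 + a * w + b/2 = w * (a + of_real (Re w) * b)"
    unfolding re wc by (simp add: algebra_simps)
  then show ?thesis using w by (simp add: norm_mult)
qed

lemma exists_reciprocal_pair:
  fixes p :: complex
  shows "\<exists>r r'. r * r' = 1 \<and> r + r' = - 2 * p \<and> 1 \<le> norm r \<and> norm r' \<le> 1"
proof -
  define s where "s = csqrt (p^2 - 1)"
  define r1 where "r1 = - p + s"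
  define r2 where "r2 = - p - s"
  have "r1 * r2 = p^2 - s^2" unfolding r1_def r2_def by (simp add: algebra_simps power2_eq_square)
  then have r12: "r1 * r2 = 1" by (simp add: s_def)
  then have n12: "norm r1 * norm r2 = 1" by (metis norm_mult norm_one)
  have r12s: "r1 + r2 = - 2 * p" by (simp add: r1_def r2_def)
  have recip: "1 \<le> norm u \<longleftrightarrow> norm v \<le> 1" if "norm u * norm v = 1" for u v :: complex
    using that mult_left_mono[of 1 "norm u" "norm v"] mult_left_mono[of "norm v" 1 "norm u"]
    by (auto simp: mult.commute)
  show ?thesis
  proof (cases "1 \<le> norm r1")
    case True
    then show ?thesis using r12 r12s recip[OF n12] by blast
  next
    case False
    then have "1 \<le> norm r2" "norm r1 \<le> 1" using recip[of r2 r1] n12 by (auto simp: mult.commute)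
    then show ?thesis using r12 r12s by (intro exI[of _ r2] exI[of _ r1]) (simp add: ac_simps)
  qed
qed

lemma exists_quadratic_affine_Re:
  fixes a b :: complex
  shows "\<exists>Q. max (norm a) (norm b) / 2 \<le> norm (lead_coeff Q)
             \<and> (\<forall>w. norm w = 1 \<longrightarrow> norm (poly Q w) = norm (a + of_real (Re w) * b))"
proof (cases "b = 0")
  case True
  then show ?thesis by (intro exI[of _ "[:0, 0, a:]"]) (auto simp: norm_mult)
next
  case False
  define p where "p = a / b"
  obtain r r' where rr: "r * r' = 1" "r + r' = - 2 * p" "1 \<le> norm r" and nr': "norm r' \<le> 1"
    using exists_reciprocal_pair by blast
  have r0: "r \<noteq> 0" using rr(3) by auto
  txt \<open>On the unit circle \<open>a + Re w * b\<close> has the modulus of \<open>(b/2) (w - r) (w - r')\<close>;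
    replacing \<open>w - r\<close> by \<open>1 - cnj r * w\<close>, of the same modulus there, puts the larger root
    into the leading coefficient.\<close>
  define Q where "Q = smult (b/2) ([:1, - cnj r:] * [:- r', 1:])"
  have d1: "degree [:1, - cnj r:] = 1" using r0 by simp
  have l1: "lead_coeff [:1, - cnj r:] = - cnj r" using d1 by simp
  have lQ: "lead_coeff Q = (b/2) * (- cnj r)" unfolding Q_def
    by (simp only: lead_coeff_smult lead_coeff_mult l1) simp
  have nlQ: "norm (lead_coeff Q) = norm b * norm r / 2" by (simp add: lQ norm_mult norm_divide)
  have "norm a = norm b * norm p" using False by (simp add: p_def norm_divide)
  also have "norm p = norm (r + r') / 2" using rr(2) by (simp add: norm_minus_commute norm_mult)
  also have "\<dots> \<le> (norm r + norm r') / 2" by (simp add: norm_triangle_ineq)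
  also have "\<dots> \<le> norm r" using nr' rr(3) by simp
  finally have "norm a \<le> norm b * norm r" by (simp add: mult_left_mono)
  moreover have "norm b \<le> norm b * norm r" using rr(3) by (simp add: mult_le_cancel_left1)
  ultimately have lead_ok: "max (norm a) (norm b) / 2 \<le> norm (lead_coeff Q)"
    unfolding nlQ by simp
  have circ: "norm (poly Q w) = norm (a + of_real (Re w) * b)" if w: "norm w = 1" for w
  proof -
    have wc: "w * cnj w = 1"
      using w by (metis complex_norm_square mult.commute of_real_1 power_one)
    have "1 - cnj r * w = w * cnj (w - r)" using wc by (simp add: algebra_simps)
    then have n1: "norm (1 - cnj r * w) = norm (w - r)" using w by (simp only: norm_mult complex_mod_cnj)
    have "poly Q w = (b/2) * ((1 - cnj r * w) * (w - r'))"
      by (simp add: Q_def algebra_simps)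
    then have "norm (poly Q w) = norm (b/2) * norm (1 - cnj r * w) * norm (w - r')"
      by (simp only: norm_mult mult.assoc)
    also have "\<dots> = norm ((b/2) * (w - r) * (w - r'))" by (simp add: n1 norm_mult)
    also have "(b/2) * (w - r) * (w - r') = (b/2) * w^2 + a * w + b/2"
    proof -
      have "(w - r) * (w - r') = w^2 - (r + r') * w + r * r'" by (simp add: algebra_simps power2_eq_square)
      also have "\<dots> = w^2 + 2 * p * w + 1" using rr by simp
      finally show ?thesis using False by (simp add: p_def field_simps)
    qed
    also have "norm \<dots> = norm (a + of_real (Re w) * b)" using norm_affine_Re_unit_circle[OF w] by simp
    finally show ?thesis .
  qed
  show ?thesis using lead_ok circ by blast
qed

lemma prod_affine_lower_bound_complex:
  fixes \<alpha> \<beta> :: "nat \<Rightarrow> complex"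
  shows "\<exists>t::real. -1 \<le> t \<and> t \<le> 1 \<and>
    (1/2)^card I * (\<Prod>i\<in>I. max (norm (\<alpha> i)) (norm (\<beta> i))) \<le> (\<Prod>i\<in>I. norm (\<alpha> i + of_real t * \<beta> i))"
proof -
  have "\<forall>i\<in>I. \<exists>Q. max (norm (\<alpha> i)) (norm (\<beta> i)) / 2 \<le> norm (lead_coeff Q)
             \<and> (\<forall>w. norm w = 1 \<longrightarrow> norm (poly Q w) = norm (\<alpha> i + of_real (Re w) * \<beta> i))"
    by (intro ballI exists_quadratic_affine_Re)
  then obtain Q where Q: "\<And>i. i \<in> I \<Longrightarrow> max (norm (\<alpha> i)) (norm (\<beta> i)) / 2 \<le> norm (lead_coeff (Q i))"
     "\<And>i w. i \<in> I \<Longrightarrow> norm w = 1 \<Longrightarrow> norm (poly (Q i) w) = norm (\<alpha> i + of_real (Re w) * \<beta> i)"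
    by metis
  define P where "P = (\<Prod>i\<in>I. Q i)"
  obtain w where w: "norm w = 1" "norm (lead_coeff P) \<le> norm (poly P w)"
    using exists_unit_circle_lead_coeff_le_poly by blast
  define t where "t = Re w"
  have t: "-1 \<le> t" "t \<le> 1" using abs_Re_le_cmod[of w] w(1) by (auto simp: t_def)
  have "(1/2)^card I * (\<Prod>i\<in>I. max (norm (\<alpha> i)) (norm (\<beta> i)))
        = (\<Prod>i\<in>I. max (norm (\<alpha> i)) (norm (\<beta> i)) / 2)"
    by (simp add: prod_dividef power_one_over)
  also have "\<dots> \<le> (\<Prod>i\<in>I. norm (lead_coeff (Q i)))"
    by (intro prod_mono conjI Q(1)) (auto simp: le_max_iff_disj)
  also have "\<dots> = norm (lead_coeff P)" by (simp add: P_def lead_coeff_prod prod_norm)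
  also have "\<dots> \<le> norm (poly P w)" by (rule w(2))
  also have "\<dots> = (\<Prod>i\<in>I. norm (poly (Q i) w))" by (simp add: P_def poly_prod prod_norm)
  also have "\<dots> = (\<Prod>i\<in>I. norm (\<alpha> i + of_real t * \<beta> i))"
    by (intro prod.cong refl) (simp add: Q(2) w(1) t_def)
  finally show ?thesis using t by blast
qed

lemma prod_affine_lower_bound_real:
  fixes \<alpha> \<beta> :: "nat \<Rightarrow> real"
  shows "\<exists>t::real. -1 \<le> t \<and> t \<le> 1 \<and>
    (1/2)^card I * (\<Prod>i\<in>I. max (norm (\<alpha> i)) (norm (\<beta> i))) \<le> (\<Prod>i\<in>I. norm (\<alpha> i + of_real t * \<beta> i))"
proof -
  obtain t where t: "-1 \<le> t" "t \<le> 1"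
    "(1/2)^card I * (\<Prod>i\<in>I. max (norm (complex_of_real (\<alpha> i))) (norm (complex_of_real (\<beta> i))))
      \<le> (\<Prod>i\<in>I. norm (complex_of_real (\<alpha> i) + of_real t * complex_of_real (\<beta> i)))"
    using prod_affine_lower_bound_complex[of _ "\<lambda>i. complex_of_real (\<alpha> i)" "\<lambda>i. complex_of_real (\<beta> i)"] by blast
  have "norm (complex_of_real (\<alpha> i) + of_real t * complex_of_real (\<beta> i)) = norm (\<alpha> i + t * \<beta> i)" for i
  proof -
    have "complex_of_real (\<alpha> i) + of_real t * complex_of_real (\<beta> i) = complex_of_real (\<alpha> i + t * \<beta> i)"
      by simp
    then show ?thesis by (simp only: norm_of_real) simp
  qed
  then show ?thesis using t by (intro exI[of _ t]) simp
qed

lemma prod_le_by_partition: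
  fixes c d m :: "nat \<Rightarrow> real"
  assumes "finite I" "I1 \<subseteq> I"
    and "\<And>i. i \<in> I \<Longrightarrow> 0 \<le> c i"
    and "\<And>i. i \<in> I1 \<Longrightarrow> c i \<le> m i"
    and "q * (\<Prod>i\<in>I - I1. c i) \<le> (\<Prod>i\<in>I - I1. d i)"
    and "\<And>i. i \<in> I - I1 \<Longrightarrow> 0 \<le> d i \<and> d i \<le> m i"
    and "0 \<le> q"
  shows "q * (\<Prod>i\<in>I. c i) \<le> (\<Prod>i\<in>I. m i)"
proof -
  have "q * (\<Prod>i\<in>I. c i) = (\<Prod>i\<in>I1. c i) * (q * (\<Prod>i\<in>I - I1. c i))"
    using prod.subset_diff[OF assms(2,1), of c] by (simp add: ac_simps)
  also have "\<dots> \<le> (\<Prod>i\<in>I1. m i) * (\<Prod>i\<in>I - I1. m i)"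
  proof (intro mult_mono prod_mono order_trans[OF assms(5)] conjI)
    show "0 \<le> c i" "c i \<le> m i" if "i \<in> I1" for i using that assms(2-4) by auto
    show "0 \<le> (\<Prod>i\<in>I1. m i)" using assms(2-4) by (intro prod_nonneg) (auto intro: order_trans)
    show "0 \<le> q * (\<Prod>i\<in>I - I1. c i)" using assms(3,7) by (intro mult_nonneg_nonneg prod_nonneg) auto
  qed (use assms(6) in auto)
  also have "\<dots> = (\<Prod>i\<in>I. m i)"
    using prod.subset_diff[OF assms(2,1), of m] by (simp add: ac_simps)
  finally show ?thesis .
qed

locale vec_norm_affine = vec_norm N for N :: "'k::{real_normed_field,heine_borel}^'n \<Rightarrow> real" +
  assumes prod_affine_lower_bound: "\<And>(I::nat set) (\<alpha>::nat \<Rightarrow> 'k) \<beta>. \<exists>t::real. -1 \<le> t \<and> t \<le> 1 \<and>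
    (1/2)^card I * (\<Prod>i\<in>I. max (norm (\<alpha> i)) (norm (\<beta> i))) \<le> (\<Prod>i\<in>I. norm (\<alpha> i + of_real t * \<beta> i))"
begin

lemma exists_cube_point_insert:
  fixes I :: "nat set" and a :: "nat \<Rightarrow> 'k^'n"
  assumes "finite J" "k \<notin> J" "finite I"
    and IH: "\<And>I (a :: nat \<Rightarrow> 'k^'n). finite I \<Longrightarrow> \<exists>t. (\<forall>j. \<bar>t j\<bar> \<le> 1) \<and> (\<forall>j. j \<notin> J \<longrightarrow> t j = 0) \<and>
       (1/2)^(card I * card J) * (\<Prod>i\<in>I. coord_max J (a i)) \<le> (\<Prod>i\<in>I. norm (pair (\<chi> j. of_real (t j)) (a i)))"
  shows "\<exists>t. (\<forall>j. \<bar>t j\<bar> \<le> 1) \<and> (\<forall>j. j \<notin> insert k J \<longrightarrow> t j = 0) \<and>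
       (1/2)^(card I * card (insert k J)) * (\<Prod>i\<in>I. coord_max (insert k J) (a i))
         \<le> (\<Prod>i\<in>I. norm (pair (\<chi> j. of_real (t j)) (a i)))"
proof -
  txt \<open>On \<open>I1\<close> the new coordinate dominates and the one-dimensional bound suffices;
    on the rest the induction hypothesis carries over.\<close>
  define I1 where "I1 = {i\<in>I. coord_max J (a i) \<le> norm (a i $ k)}"
  obtain t where t: "\<forall>j. \<bar>t j\<bar> \<le> 1" "\<forall>j. j \<notin> J \<longrightarrow> t j = 0"
      "(1/2)^(card (I - I1) * card J) * (\<Prod>i\<in>I - I1. coord_max J (a i))
         \<le> (\<Prod>i\<in>I - I1. norm (pair (\<chi> j. of_real (t j)) (a i)))"
    using IH[of "I - I1" a] \<open>finite I\<close> by blast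
  define \<alpha> where "\<alpha> i = pair (\<chi> j. of_real (t j)) (a i)" for i
  define \<beta> where "\<beta> i = a i $ k" for i
  obtain s where s: "-1 \<le> s" "s \<le> 1"
      "(1/2)^card I * (\<Prod>i\<in>I. max (norm (\<alpha> i)) (norm (\<beta> i))) \<le> (\<Prod>i\<in>I. norm (\<alpha> i + of_real s * \<beta> i))"
    using prod_affine_lower_bound by blast
  define t' where "t' = t(k := s)"
  have "(\<chi> j. (of_real (t' j) :: 'k)) = (\<chi> j. of_real (t j)) + of_real s *s axis k 1"
    using t(2) \<open>k \<notin> J\<close> by (simp add: vec_eq_iff axis_def t'_def)
  then have pair_t': "pair (\<chi> j. of_real (t' j)) (a i) = \<alpha> i + of_real s * \<beta> i" for i
    by (simp add: pair_add pair_scale pair_axis_left \<alpha>_def \<beta>_def)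
  have "(1/2)^(card (I - I1) * card J) * (\<Prod>i\<in>I. coord_max (insert k J) (a i))
      \<le> (\<Prod>i\<in>I. max (norm (\<alpha> i)) (norm (\<beta> i)))"
  proof (rule prod_le_by_partition[where d = "\<lambda>i. norm (\<alpha> i)"])
    have "(\<Prod>i\<in>I - I1. coord_max (insert k J) (a i)) = (\<Prod>i\<in>I - I1. coord_max J (a i))"
      by (rule prod.cong) (auto simp: coord_max_insert I1_def max_def)
    then show "(1/2)^(card (I - I1) * card J) * (\<Prod>i\<in>I - I1. coord_max (insert k J) (a i))
        \<le> (\<Prod>i\<in>I - I1. norm (\<alpha> i))"
      using t(3) by (simp add: \<alpha>_def)
  qed (use \<open>finite I\<close> in \<open>auto simp: I1_def \<beta>_def coord_max_insert coord_max_nonneg le_max_iff_disj\<close>)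
  moreover have "(1/2::real)^(card I * card J) \<le> (1/2)^(card (I - I1) * card J)"
    using \<open>finite I\<close> by (intro power_decreasing) (auto intro: card_mono)
  ultimately have "(1/2)^(card I * card J) * (\<Prod>i\<in>I. coord_max (insert k J) (a i))
      \<le> (\<Prod>i\<in>I. max (norm (\<alpha> i)) (norm (\<beta> i)))"
    by (meson order_trans mult_right_mono prod_nonneg coord_max_nonneg)
  then have "(1/2)^card I * ((1/2)^(card I * card J) * (\<Prod>i\<in>I. coord_max (insert k J) (a i)))
      \<le> (\<Prod>i\<in>I. norm (\<alpha> i + of_real s * \<beta> i))"
    by (rule order_trans[OF mult_left_mono s(3)]) simp
  moreover have "card (insert k J) = Suc (card J)" using \<open>finite J\<close> \<open>k \<notin> J\<close> by simp
  moreover have "\<forall>j. \<bar>t' j\<bar> \<le> 1" "\<forall>j. j \<notin> insert k J \<longrightarrow> t' j = 0"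
    using t(1,2) s(1,2) by (auto simp: t'_def)
  ultimately show ?thesis by (intro exI[of _ t']) (simp add: pair_t' power_add mult_ac)
qed

lemma exists_cube_point_prod_pair_ge:
  fixes I :: "nat set" and a :: "nat \<Rightarrow> 'k^'n"
  assumes "finite J" "finite I"
  shows "\<exists>t. (\<forall>j. \<bar>t j\<bar> \<le> 1) \<and> (\<forall>j. j \<notin> J \<longrightarrow> t j = 0) \<and>
     (1/2)^(card I * card J) * (\<Prod>i\<in>I. coord_max J (a i)) \<le> (\<Prod>i\<in>I. norm (pair (\<chi> j. of_real (t j)) (a i)))"
  using assms
proof (induction J arbitrary: I a rule: finite_induct)
  case empty
  have "(\<Prod>i\<in>I. coord_max {} (a i)) = (\<Prod>i\<in>I. norm (pair (\<chi> j. (of_real 0 :: 'k)) (a i)))"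
    by (intro prod.cong) (simp_all add: vec_eq_iff flip: zero_vec_def)
  then show ?case by (intro exI[of _ "\<lambda>_. 0"]) simp
next
  case (insert k J)
  then show ?case by (intro exists_cube_point_insert) auto
qed

lemma prod_dual_norm_le_power_prod_norm:
  "\<exists>C>0. \<forall>n \<psi>. (\<Prod>i<n. dual_norm N (\<psi> i)) \<le> C ^ n * prod_norm N n \<psi>"
proof -
  obtain K where K: "K > 0" "\<And>\<psi>. dual_norm N \<psi> \<le> K * coord_max UNIV \<psi>"
    using dual_norm_le_coord_max by blast
  define A where "A = (\<Sum>j\<in>UNIV. N (axis j 1))"
  define C where "C = K * 2 ^ CARD('n) * A"
  have A: "A \<ge> 0" unfolding A_def by (intro sum_nonneg N_nonneg)
  have "(\<Prod>i<n. dual_norm N (\<psi> i)) \<le> (C + 1) ^ n * prod_norm N n \<psi>" for n \<psi>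
  proof -
    obtain t where t: "\<forall>j. \<bar>t j\<bar> \<le> 1"
        "(1/2)^(n * CARD('n)) * (\<Prod>i<n. coord_max UNIV (\<psi> i))
          \<le> (\<Prod>i<n. norm (pair (\<chi> j. of_real (t j)) (\<psi> i)))"
      using exists_cube_point_prod_pair_ge[of UNIV "{..<n}" \<psi>] by auto
    have "(1/2)^(n * CARD('n)) * (\<Prod>i<n. coord_max UNIV (\<psi> i)) \<le> A ^ n * prod_norm N n \<psi>"
    proof -
      have "N (\<chi> j. of_real (t j)) \<le> A" unfolding A_def by (rule N_cube_le) (use t(1) in blast)
      from order_trans[OF t(2) prod_pair_le_power_prod_norm[OF this]] show ?thesis .
    qed
    then have cube: "(\<Prod>i<n. coord_max UNIV (\<psi> i)) \<le> (2 ^ CARD('n)) ^ n * (A ^ n * prod_norm N n \<psi>)"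
      by (simp add: power_one_over field_simps flip: power_mult)
    have "(\<Prod>i<n. dual_norm N (\<psi> i)) \<le> (\<Prod>i<n. K * coord_max UNIV (\<psi> i))"
      by (intro prod_mono conjI dual_norm_nonneg K(2))
    also have "\<dots> = K ^ n * (\<Prod>i<n. coord_max UNIV (\<psi> i))" by (simp add: prod.distrib)
    also have "\<dots> \<le> K ^ n * ((2 ^ CARD('n)) ^ n * (A ^ n * prod_norm N n \<psi>))"
      using cube K(1) by (intro mult_left_mono) auto
    also have "\<dots> = C ^ n * prod_norm N n \<psi>" by (simp add: C_def power_mult_distrib)
    also have "\<dots> \<le> (C + 1) ^ n * prod_norm N n \<psi>"
      using K(1) A by (intro mult_right_mono power_mono prod_norm_nonneg) (auto simp: C_def)
    finally show ?thesis .
  qed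
  moreover have "C + 1 > 0" using K(1) A by (simp add: C_def add_nonneg_pos)
  ultimately show ?thesis by blast
qed

end

lemma superadditive_mult_le:
  fixes a :: "nat \<Rightarrow> real"
  assumes "\<And>p q. a p + a q \<le> a (p + q)" "a 0 \<ge> 0"
  shows "real q * a m \<le> a (q * m)"
proof (induction q)
  case (Suc q)
  have "real (Suc q) * a m \<le> a (q * m) + a m" using Suc by (simp add: algebra_simps)
  also have "\<dots> \<le> a (Suc q * m)" using assms(1)[of "q * m" m] by (simp add: add.commute)
  finally show ?case .
qed (use assms(2) in simp)

lemma fekete_superadditive:
  fixes a :: "nat \<Rightarrow> real"
  assumes nonneg: "\<And>k. 0 \<le> a k" and superadd: "\<And>p q. a p + a q \<le> a (p + q)"
    and linear: "\<And>k. a k \<le> real k * B"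
  shows "(\<lambda>k. a k / real k) \<longlonglongrightarrow> (SUP k\<in>{1..}. a k / real k)"
proof -
  define L where "L = (SUP k\<in>{1..}. a k / real k)"
  have bdd: "bdd_above ((\<lambda>k. a k / real k) ` {1..})"
    using linear by (intro bdd_aboveI[of _ B]) (auto simp: divide_le_eq mult.commute)
  show ?thesis unfolding L_def[symmetric]
  proof (rule LIMSEQ_I)
    fix r :: real assume r: "r > 0"
    obtain m where m: "m \<ge> 1" "L - r/2 < a m / real m"
      using less_cSUP_iff[OF _ bdd, of "L - r/2"] r unfolding L_def by auto
    obtain N0 :: nat where N0: "real N0 > 2 * real m * B / r" using reals_Archimedean2 by blast
    have "\<bar>a n / real n - L\<bar> < r" if n: "n \<ge> max m N0" for n
    proof -
      have n_pos: "real n > 0" using n m by auto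
      define q where "q = n div m"
      have "n = q * m + n mod m" by (simp add: q_def)
      moreover have "n mod m < m" using m by simp
      ultimately have "real n < real q * real m + real m"
        by (metis add_less_cancel_left of_nat_add of_nat_less_iff of_nat_mult)
      then have qm: "real n - real m \<le> real q * real m" by linarith
      have "real q * a m \<le> a (q * m)" by (rule superadditive_mult_le[OF superadd nonneg])
      also have "\<dots> \<le> a (q * m) + a (n mod m)" using nonneg by simp
      also have "\<dots> \<le> a n" using superadd by (metis div_mult_mod_eq q_def)
      finally have qa: "real q * a m \<le> a n" .
      define X where "X = a m / real m"
      have mX: "real m * X = a m" using m by (simp add: X_def)
      have "(real n - real m) * X \<le> real q * real m * X"
        using qm nonneg[of m] by (intro mult_right_mono) (auto simp: X_def)
      then have "(real n - real m) * X \<le> a n" using qa mX by (simp add: mult.assoc)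
      moreover have "real m * X \<le> real m * B" using linear[of m] mX by simp
      ultimately have "real n * X - real m * B \<le> a n" by (simp add: algebra_simps)
      then have "(real n * X - real m * B) / real n \<le> a n / real n"
        using n_pos by (simp add: divide_right_mono)
      then have "X - real m * B / real n \<le> a n / real n"
        using n_pos by (simp add: diff_divide_distrib)
      moreover have "real m * B / real n < r / 2"
      proof -
        have "2 * real m * B / r < real n" using N0 n by linarith
        then show ?thesis using r n_pos by (simp add: field_simps)
      qed
      moreover have "a n / real n \<le> L"
        unfolding L_def using n m by (intro cSUP_upper bdd) auto
      ultimately show ?thesis using m(2) by (simp add: X_def abs_less_iff)
    qed
    then show "\<exists>no. \<forall>n\<ge>no. norm (a n / real n - L) < r" by (metis real_norm_def)
  qed
qed

context vec_norm_affine
begin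

abbreviation c_n_constants :: "nat \<Rightarrow> real set" where
  "c_n_constants n \<equiv> {C. \<forall>\<psi>::nat \<Rightarrow> 'k^'n. (\<Prod>i<n. dual_norm N (\<psi> i)) \<le> C * prod_norm N n \<psi>}"

lemma c_n_constants_nonneg: "C \<in> c_n_constants n \<Longrightarrow> C \<ge> 0"
proof (rule ccontr)
  assume C: "C \<in> c_n_constants n" "\<not> C \<ge> 0"
  obtain \<psi> where \<psi>: "dual_norm N \<psi> > 0" using exists_dual_norm_pos by blast
  have "0 < (\<Prod>i<n. dual_norm N \<psi>)" using \<psi> by simp
  also have "\<dots> \<le> C * prod_norm N n (\<lambda>_. \<psi>)" using C(1) by (auto dest: spec[of _ "\<lambda>_. \<psi>"])
  also have "\<dots> \<le> 0" using C(2) by (intro mult_nonpos_nonneg prod_norm_nonneg) auto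
  finally show False by simp
qed

lemma prod_dual_norm_le_c_n: "(\<Prod>i<n. dual_norm N (\<psi> i)) \<le> c_n N n * prod_norm N n \<psi>"
proof -
  obtain C where C: "C > 0" "\<And>n \<psi>. (\<Prod>i<n. dual_norm N (\<psi> i)) \<le> C ^ n * prod_norm N n \<psi>"
    using prod_dual_norm_le_power_prod_norm by blast
  show ?thesis
  proof (cases "prod_norm N n \<psi> > 0")
    case True
    have "(\<Prod>i<n. dual_norm N (\<psi> i)) / prod_norm N n \<psi> \<le> c_n N n"
      unfolding c_n_def
    proof (rule cInf_greatest)
      show "c_n_constants n \<noteq> {}" using C(2) by blast
    qed (use True in \<open>auto simp: divide_le_eq\<close>)
    then show ?thesis using True by (simp add: divide_le_eq)
  next
    case False
    then show ?thesis using C(2)[where n=n and \<psi>=\<psi>] prod_norm_nonneg[where n=n and \<psi>=\<psi>] by simp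
  qed
qed

lemma c_n_le: "(\<And>\<psi>. (\<Prod>i<n. dual_norm N (\<psi> i)) \<le> C * prod_norm N n \<psi>) \<Longrightarrow> c_n N n \<le> C"
  unfolding c_n_def
proof (rule cInf_lower)
  show "bdd_below (c_n_constants n)" by (rule bdd_belowI[of _ 0]) (rule c_n_constants_nonneg)
qed auto

lemma c_n_ge_1: "c_n N n \<ge> 1"
proof -
  obtain \<psi> where \<psi>: "dual_norm N \<psi> > 0" using exists_dual_norm_pos by blast
  have "dual_norm N \<psi> ^ n \<le> c_n N n * prod_norm N n (\<lambda>_. \<psi>)"
    using prod_dual_norm_le_c_n[where n=n and \<psi>="\<lambda>_. \<psi>"] by simp
  also have "\<dots> \<le> c_n N n * dual_norm N \<psi> ^ n"
    using prod_norm_le_prod_dual_norm[where n=n and \<psi>="\<lambda>_. \<psi>"] c_n_constants_nonneg prod_dual_norm_le_c_n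
    by (intro mult_left_mono) auto
  finally show ?thesis using \<psi> by simp
qed

lemma c_n_le_power: "\<exists>C>0. \<forall>n. c_n N n \<le> C ^ n"
  using prod_dual_norm_le_power_prod_norm c_n_le by blast

lemma c_n_mult_le_c_n_add: "c_n N n * c_n N m \<le> c_n N (n + m)"
proof -
  define c where "c = c_n N (n + m)"
  have c: "c \<ge> 1" "c_n N n \<ge> 1" unfolding c_def by (rule c_n_ge_1)+
  have combined: "(\<Prod>i<n. dual_norm N (\<psi> i)) * (\<Prod>i<m. dual_norm N (\<phi> i))
      \<le> c * (prod_norm N n \<psi> * prod_norm N m \<phi>)" for \<psi> \<phi>
  proof -
    define \<xi> where "\<xi> i = (if i < n then \<psi> i else \<phi> (i - n))" for i
    have "(\<Prod>i<n. dual_norm N (\<psi> i)) * (\<Prod>i<m. dual_norm N (\<phi> i)) = (\<Prod>i<n + m. dual_norm N (\<xi> i))"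
      by (simp add: prod_lessThan_add \<xi>_def)
    also have "\<dots> \<le> c * prod_norm N (n + m) \<xi>" unfolding c_def by (rule prod_dual_norm_le_c_n)
    also have "\<dots> \<le> c * (prod_norm N n \<psi> * prod_norm N m \<phi>)"
      unfolding \<xi>_def using c by (intro mult_left_mono prod_norm_append) auto
    finally show ?thesis .
  qed
  have "(\<Prod>i<m. dual_norm N (\<phi> i)) \<le> (c / c_n N n) * prod_norm N m \<phi>" for \<phi>
  proof (cases "(\<Prod>i<m. dual_norm N (\<phi> i)) > 0")
    case True
    have "c_n N n \<le> c * prod_norm N m \<phi> / (\<Prod>i<m. dual_norm N (\<phi> i))"
      using combined[of _ \<phi>] True by (intro c_n_le) (simp add: field_simps)
    then show ?thesis using True c by (simp add: field_simps)
  next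
    case False
    then show ?thesis using c by (smt (verit) divide_nonneg_nonneg mult_nonneg_nonneg prod_norm_nonneg)
  qed
  then have "c_n N m \<le> c / c_n N n" by (rule c_n_le)
  then show ?thesis using c by (simp add: c_def field_simps)
qed

definition c_exponent :: real where
  "c_exponent = (SUP k\<in>{1..}. ln (c_n N k) / real k)"

lemma ln_c_n_div_tendsto: "(\<lambda>k. ln (c_n N k) / real k) \<longlonglongrightarrow> c_exponent"
  and ln_c_n_div_le_c_exponent: "k \<ge> 1 \<Longrightarrow> ln (c_n N k) / real k \<le> c_exponent"
proof -
  obtain C where C: "C > 0" "\<And>n. c_n N n \<le> C ^ n" using c_n_le_power by blast
  have lin_bound: "ln (c_n N k) \<le> real k * ln C" for k
    using C c_n_ge_1[of k] ln_le_cancel_iff[of "c_n N k" "C ^ k"] by (simp add: ln_realpow)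
  have "ln (c_n N p) + ln (c_n N q) \<le> ln (c_n N (p + q))" for p q
  proof -
    have pos: "c_n N p > 0" "c_n N q > 0" using c_n_ge_1[of p] c_n_ge_1[of q] by auto
    then have "ln (c_n N p) + ln (c_n N q) = ln (c_n N p * c_n N q)" by (simp add: ln_mult)
    also have "\<dots> \<le> ln (c_n N (p + q))"
      using pos c_n_mult_le_c_n_add[of p q] c_n_ge_1[of "p + q"] by (subst ln_le_cancel_iff) auto
    finally show ?thesis .
  qed
  then show "(\<lambda>k. ln (c_n N k) / real k) \<longlonglongrightarrow> c_exponent"
    unfolding c_exponent_def using c_n_ge_1 lin_bound by (intro fekete_superadditive) auto
  show "ln (c_n N k) / real k \<le> c_exponent" if "k \<ge> 1"
    unfolding c_exponent_def using that lin_bound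
    by (intro cSUP_upper) (auto intro!: bdd_aboveI[of _ "ln C"] simp: divide_le_eq mult.commute)
qed

lemma c_X_eq_exp_c_exponent: "c_X N = exp c_exponent"
proof -
  have "\<forall>\<^sub>F k in sequentially. exp (ln (c_n N k) / real k) = root k (c_n N k)"
  proof (rule eventually_sequentiallyI[of 1])
    fix k :: nat assume "k \<ge> 1"
    then show "exp (ln (c_n N k) / real k) = root k (c_n N k)"
      using c_n_ge_1[of k] by (simp add: root_powr_inverse powr_def)
  qed
  then have "(\<lambda>k. root k (c_n N k)) \<longlonglongrightarrow> exp c_exponent"
    by (rule Lim_transform_eventually[OF tendsto_exp[OF ln_c_n_div_tendsto]])
  then show ?thesis unfolding c_X_def by (rule limI)
qed

lemma c_exponent_ge:
  assumes "k > 0" "\<And>i. i < k \<Longrightarrow> dual_norm N (\<psi> i) = 1" "prod_norm N k \<psi> \<le> exp (real k * a)"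
  shows "- a \<le> c_exponent"
proof -
  have "1 \<le> c_n N k * prod_norm N k \<psi>"
    using prod_dual_norm_le_c_n[where n=k and \<psi>=\<psi>] assms(2) by simp
  also have "\<dots> \<le> c_n N k * exp (real k * a)"
    using assms(3) c_n_ge_1[of k] by (intro mult_left_mono) auto
  finally have "0 \<le> ln (c_n N k * exp (real k * a))" by simp
  then have "0 \<le> ln (c_n N k) + real k * a"
    using c_n_ge_1[of k] by (simp add: ln_mult)
  then have "- a \<le> ln (c_n N k) / real k" using assms(1) by (simp add: field_simps)
  also have "\<dots> \<le> c_exponent" using assms(1) by (intro ln_c_n_div_le_c_exponent) auto
  finally show ?thesis .
qed

end

lemma exp_le_quadratic:
  fixes s :: real
  assumes "\<bar>s\<bar> \<le> 1"
  shows "exp s \<le> 1 + s + 2 * s^2"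
proof -
  obtain t where t: "\<bar>t\<bar> \<le> \<bar>s\<bar>" "exp s = (\<Sum>m<2. s^m / fact m) + exp t / fact 2 * s^2"
    using Maclaurin_exp_le[of s 2] by blast
  have "exp t \<le> exp 1" using t(1) assms by simp
  then have "exp t \<le> 3" using exp_le by linarith
  then have "exp t / fact 2 * s^2 \<le> 2 * s^2" by (intro mult_right_mono) auto
  moreover have "(\<Sum>m<2. s^m / fact m) = 1 + s" by (simp add: numeral_2_eq_2)
  ultimately show ?thesis using t(2) by linarith
qed

lemma (in prob_space) expectation_exp_le:
  fixes u :: "'a \<Rightarrow> real"
  assumes u: "u \<in> borel_measurable M" "\<And>z. z \<in> space M \<Longrightarrow> \<bar>u z\<bar> \<le> B" "expectation u = 0"
    and t: "t \<ge> 0" "t * B \<le> 1"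
  shows "expectation (\<lambda>z. exp (t * u z)) \<le> exp (2 * t^2 * B^2)"
proof -
  have B: "B \<ge> 0" using u(2) not_empty by (meson abs_ge_zero ex_in_conv order_trans)
  have u2_le: "(u z)^2 \<le> B^2" if "z \<in> space M" for z
    using u(2)[OF that] B by (simp add: abs_le_square_iff[symmetric])
  have int_u: "integrable M u"
    using u(1,2) by (intro integrable_const_bound[of _ B]) auto
  have int_u2: "integrable M (\<lambda>z. (u z)^2)"
    using u(1) u2_le by (intro integrable_const_bound[of _ "B^2"]) auto
  have int_exp: "integrable M (\<lambda>z. exp (t * u z))"
    using u(1,2) t by (intro integrable_const_bound[of _ "exp (t * B)"])
      (auto intro!: mult_left_mono simp: abs_le_iff)
  have "exp (t * u z) \<le> 1 + t * u z + 2 * t^2 * (u z)^2" if "z \<in> space M" for z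
  proof -
    have "\<bar>t * u z\<bar> \<le> 1"
      using u(2)[OF that] t by (simp add: abs_mult) (meson mult_left_mono order_trans)
    then show ?thesis using exp_le_quadratic[of "t * u z"] by (simp add: power_mult_distrib)
  qed
  then have "expectation (\<lambda>z. exp (t * u z)) \<le> expectation (\<lambda>z. 1 + t * u z + 2 * t^2 * (u z)^2)"
    using int_u int_u2 by (intro integral_mono[OF int_exp]) auto
  also have "\<dots> = 1 + 2 * t^2 * expectation (\<lambda>z. (u z)^2)"
    using int_u int_u2 u(3) prob_space by simp
  also have "\<dots> \<le> 1 + 2 * t^2 * B^2"
    using int_u2 u2_le by (intro add_left_mono mult_left_mono integral_le_const) auto
  also have "\<dots> \<le> exp (2 * t^2 * B^2)" by (rule exp_ge_add_one_self)
  finally show ?thesis .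
qed

lemma (in prob_space) exists_samples_sum_prod_le:
  fixes g :: "'b \<Rightarrow> 'a \<Rightarrow> real"
  assumes "finite F" "F \<noteq> {}"
    and g: "\<And>y. y \<in> F \<Longrightarrow> integrable M (g y)" "\<And>y z. y \<in> F \<Longrightarrow> z \<in> space M \<Longrightarrow> 0 < g y z"
      "\<And>y. y \<in> F \<Longrightarrow> expectation (g y) < K"
  shows "\<exists>\<omega>. (\<forall>i<k. \<omega> i \<in> space M) \<and> (\<Sum>y\<in>F. \<Prod>i<k. g y (\<omega> i)) \<le> real (card F) * K ^ k"
proof -
  have K: "K \<ge> 0"
  proof -
    obtain y where y: "y \<in> F" using assms(2) by blast
    have "0 \<le> expectation (g y)"
      using g(2)[OF y] by (intro integral_nonneg_AE AE_I2 less_imp_le) auto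
    then show ?thesis using g(3)[OF y] by linarith
  qed
  show ?thesis
  proof (induction k)
    case 0
    then show ?case by simp
  next
    case (Suc k)
    then obtain \<omega> where \<omega>: "\<forall>i<k. \<omega> i \<in> space M" "(\<Sum>y\<in>F. \<Prod>i<k. g y (\<omega> i)) \<le> real (card F) * K ^ k"
      by blast
    define c where "c y = (\<Prod>i<k. g y (\<omega> i))" for y
    define \<Psi> where "\<Psi> z = (\<Sum>y\<in>F. c y * g y z)" for z
    have c: "c y > 0" if "y \<in> F" for y
      unfolding c_def using \<omega>(1) g(2)[OF that] by (intro prod_pos) auto
    have "expectation \<Psi> = (\<Sum>y\<in>F. c y * expectation (g y))"
      unfolding \<Psi>_def using g(1) by (simp add: integral_sum)
    also have "\<dots> < (\<Sum>y\<in>F. c y * K)"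
      using assms(1,2) c g(3) by (intro sum_strict_mono mult_strict_left_mono) auto
    finally have E\<Psi>: "expectation \<Psi> < (\<Sum>y\<in>F. c y) * K" by (simp add: sum_distrib_right)
    obtain z where z: "z \<in> space M" "\<Psi> z \<le> (\<Sum>y\<in>F. c y) * K"
    proof (rule ccontr)
      assume "\<not> thesis"
      then have "\<And>z. z \<in> space M \<Longrightarrow> (\<Sum>y\<in>F. c y) * K \<le> \<Psi> z"
        using that by force
      then have "(\<Sum>y\<in>F. c y) * K \<le> expectation \<Psi>"
        unfolding \<Psi>_def using g(1) by (intro integral_ge_const) (auto simp: \<Psi>_def)
      then show False using E\<Psi> by simp
    qed
    define \<omega>' where "\<omega>' = fun_upd \<omega> k z"
    have "(\<Sum>y\<in>F. \<Prod>i<Suc k. g y (\<omega>' i)) = \<Psi> z"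
      unfolding \<Psi>_def c_def \<omega>'_def by (intro sum.cong refl) (simp add: mult.commute)
    also have "\<dots> \<le> real (card F) * K ^ k * K"
      using z(2) mult_right_mono[OF \<omega>(2) K] by (simp add: c_def)
    finally show ?case using \<omega>(1) z(1) by (intro exI[of _ \<omega>']) (auto simp: \<omega>'_def less_Suc_eq ac_simps)
  qed
qed

text \<open>The samples are chosen greedily so that the exponential potential
  \<open>\<Sum>y\<in>F. exp (t * (\<Sum>i<n. h y (\<omega> i) - expectation (h y)))\<close> grows by at most a factor
  \<open>exp (4 * t\<^sup>2 * B\<^sup>2)\<close> per sample (a derandomised Chernoff bound).\<close>
lemma (in prob_space) exists_samples_average_le:
  fixes h :: "'b \<Rightarrow> 'a \<Rightarrow> real"
  assumes F: "finite F" "F \<noteq> {}" and B: "B > 0" and \<epsilon>: "\<epsilon> > 0"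
    and h: "\<And>y. y \<in> F \<Longrightarrow> h y \<in> borel_measurable M"
      "\<And>y z. y \<in> F \<Longrightarrow> z \<in> space M \<Longrightarrow> -B \<le> h y z \<and> h y z \<le> 0"
  shows "\<exists>n>0. \<exists>\<omega>. (\<forall>i<n. \<omega> i \<in> space M) \<and>
    (\<forall>y\<in>F. (\<Sum>i<n. h y (\<omega> i)) \<le> real n * (expectation (h y) + \<epsilon>))"
proof -
  define u where "u y z = h y z - expectation (h y)" for y z
  have int_h: "integrable M (h y)" if "y \<in> F" for y
    using h[OF that] by (intro integrable_const_bound[of _ B] AE_I2) (force simp: abs_le_iff)+
  have mean_bounds: "-B \<le> expectation (h y)" "expectation (h y) \<le> 0" if "y \<in> F" for y
    using h(2)[OF that] int_h[OF that] by (auto intro!: integral_ge_const integral_le_const AE_I2)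
  have u_bound: "\<bar>u y z\<bar> \<le> B" if "y \<in> F" "z \<in> space M" for y z
    using h(2)[OF that] mean_bounds[OF that(1)] by (auto simp: u_def abs_le_iff)
  have u_meas: "u y \<in> borel_measurable M" if "y \<in> F" for y
    using h(1)[OF that] unfolding u_def[abs_def] by measurable
  have u_mean: "expectation (u y) = 0" if "y \<in> F" for y
    using int_h[OF that] prob_space unfolding u_def[abs_def] by simp
  define t where "t = min (1 / B) (\<epsilon> / (8 * B^2))"
  have t: "t > 0" "t * B \<le> 1" "4 * t * B^2 \<le> \<epsilon> / 2"
    using B \<epsilon> by (auto simp: t_def min_def field_simps)
  define K where "K = exp (4 * t^2 * B^2)"
  have exp_moment: "expectation (\<lambda>z. exp (t * u y z)) < K" if "y \<in> F" for y
  proof -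
    have "expectation (\<lambda>z. exp (t * u y z)) \<le> exp (2 * t^2 * B^2)"
      using expectation_exp_le[OF u_meas[OF that] u_bound[OF that] u_mean[OF that]] t by simp
    also have "\<dots> < K" using t(1) B by (simp add: K_def)
    finally show ?thesis .
  qed
  obtain n :: nat where n: "real n > max 1 (2 * ln (real (card F)) / (t * \<epsilon>))"
    using reals_Archimedean2 by blast
  have int_exp: "integrable M (\<lambda>z. exp (t * u y z))" if y: "y \<in> F" for y
  proof -
    have "exp (t * u y z) \<le> exp (t * B)" if "z \<in> space M" for z
      using u_bound[OF y that] t(1) by (simp add: abs_le_iff mult_left_mono)
    then show ?thesis
      using u_meas[OF y] by (intro integrable_const_bound[of _ "exp (t * B)"] AE_I2) auto
  qed
  obtain \<omega> where \<omega>: "\<forall>i<n. \<omega> i \<in> space M"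
      "(\<Sum>y\<in>F. \<Prod>i<n. exp (t * u y (\<omega> i))) \<le> real (card F) * K ^ n"
    using exists_samples_sum_prod_le[OF F, where g = "\<lambda>y z. exp (t * u y z)" and K = K and k = n]
      int_exp exp_moment by auto
  have card_F: "real (card F) \<ge> 1" using F by (simp add: Suc_le_eq card_gt_0_iff)
  have "(\<Sum>i<n. h y (\<omega> i)) \<le> real n * (expectation (h y) + \<epsilon>)" if y: "y \<in> F" for y
  proof -
    define U where "U = (\<Sum>i<n. u y (\<omega> i))"
    have "exp (t * U) \<le> (\<Sum>y\<in>F. \<Prod>i<n. exp (t * u y (\<omega> i)))"
      unfolding U_def sum_distrib_left exp_sum[OF finite_lessThan, symmetric]
      using F y by (intro member_le_sum) auto
    then have "t * U \<le> ln (real (card F) * K ^ n)"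
      using \<omega>(2) card_F by (subst ln_ge_iff) (auto simp: K_def)
    also have "\<dots> = ln (real (card F)) + real n * (4 * t^2 * B^2)"
      using card_F by (simp add: ln_mult ln_realpow K_def)
    finally have "U \<le> ln (real (card F)) / t + real n * (4 * t * B^2)"
      using t(1) by (simp add: field_simps power2_eq_square)
    also have "\<dots> \<le> real n * \<epsilon> / 2 + real n * (\<epsilon> / 2)"
      using n t \<epsilon> by (intro add_mono mult_left_mono) (auto simp: field_simps)
    finally have "U \<le> real n * \<epsilon>" by (simp add: mult.commute)
    then show ?thesis by (simp add: U_def u_def sum_subtractf algebra_simps)
  qed
  then show ?thesis using n \<omega>(1) by (intro exI[of _ n]) auto
qed

lemma ln_max_diff_le:
  fixes a b c :: real
  assumes "a \<ge> 0" "b \<ge> 0" "c > 0"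
  shows "\<bar>ln (max a c) - ln (max b c)\<bar> \<le> \<bar>a - b\<bar> / c"
proof -
  have "ln u - ln v \<le> \<bar>a - b\<bar> / c"
    if "u = max a c \<and> v = max b c \<or> u = max b c \<and> v = max a c" for u v
  proof -
    have uv: "u \<ge> c" "v \<ge> c" "\<bar>u - v\<bar> \<le> \<bar>a - b\<bar>" using that by (auto simp: max_def)
    have "ln u - ln v \<le> u / v - 1"
      using uv assms(3) ln_le_minus_one[of "u / v"] by (simp add: ln_div)
    also have "\<dots> = (u - v) / v" using uv assms(3) by (simp add: field_simps)
    also have "\<dots> \<le> \<bar>u - v\<bar> / c"
      using uv assms(3) by (smt (verit) divide_right_mono frac_le abs_ge_zero divide_nonpos_pos)
    finally show ?thesis using uv(3) assms(3) by (smt (verit) divide_right_mono)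
  qed
  from this[of "max a c" "max b c"] this[of "max b c" "max a c"] show ?thesis by linarith
qed

locale admissible_dual_measure = vec_norm_affine N for N :: "'k::{real_normed_field,heine_borel}^'n \<Rightarrow> real" +
  fixes \<eta> :: "('k^'n) measure"
  assumes prob_on_dual_sphere: "prob_on_dual_sphere N \<eta>" and admissible: "admissible N \<eta>"
begin

lemma prob_space_\<eta>: "prob_space \<eta>"
  using prob_on_dual_sphere by (simp add: prob_on_dual_sphere_def)

lemma dual_norm_eq_1: "\<psi> \<in> space \<eta> \<Longrightarrow> dual_norm N \<psi> = 1"
  using prob_on_dual_sphere by (simp add: prob_on_dual_sphere_def dual_sphere_def)

lemma borel_measurable_\<eta>: "f \<in> borel_measurable borel \<Longrightarrow> f \<in> borel_measurable \<eta>"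
  using prob_on_dual_sphere unfolding prob_on_dual_sphere_def
  by (subst measurable_cong_sets[of _ "restrict_space borel (dual_sphere N)"]) (auto intro: measurable_restrict_space1)

lemma pair_borel_measurable [measurable]: "(\<lambda>\<psi>. pair x \<psi>) \<in> borel_measurable borel"
  unfolding pair_def by (intro borel_measurable_continuous_onI continuous_intros)

definition log_pair_trunc :: "nat \<Rightarrow> 'k^'n \<Rightarrow> 'k^'n \<Rightarrow> real" where
  "log_pair_trunc m x \<psi> = ln (max (norm (pair x \<psi>)) (exp (- real m)))"

definition log_integral_trunc :: "nat \<Rightarrow> 'k^'n \<Rightarrow> real" where
  "log_integral_trunc m x = (\<integral>\<psi>. max (ln (norm (pair x \<psi>))) (- real m) \<partial>\<eta>)"

definition log_integral :: "'k^'n \<Rightarrow> real" where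
  "log_integral x = (\<integral>\<psi>. ln (norm (pair x \<psi>)) \<partial>\<eta>)"

lemma log_pair_trunc_bounds:
  assumes "x \<in> S" "\<psi> \<in> space \<eta>"
  shows "- real m \<le> log_pair_trunc m x \<psi>" "log_pair_trunc m x \<psi> \<le> 0"
proof -
  have "norm (pair x \<psi>) \<le> 1" using pair_le_dual_norm[OF assms(1), of \<psi>] dual_norm_eq_1[OF assms(2)] by simp
  then show "log_pair_trunc m x \<psi> \<le> 0"
    unfolding log_pair_trunc_def by (subst ln_le_zero_iff) (auto simp: less_max_iff_disj)
  show "- real m \<le> log_pair_trunc m x \<psi>"
    unfolding log_pair_trunc_def by (subst ln_ge_iff) (auto simp: less_max_iff_disj)
qed

lemma norm_pair_le_exp_log_pair_trunc: "norm (pair x \<psi>) \<le> exp (log_pair_trunc m x \<psi>)"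
  unfolding log_pair_trunc_def by (subst exp_ln) (auto simp: less_max_iff_disj)

lemma log_pair_trunc_lipschitz:
  assumes "\<psi> \<in> space \<eta>"
  shows "\<bar>log_pair_trunc m x \<psi> - log_pair_trunc m y \<psi>\<bar> \<le> exp (real m) * N (x - y)"
proof -
  have "\<bar>log_pair_trunc m x \<psi> - log_pair_trunc m y \<psi>\<bar> \<le> \<bar>norm (pair x \<psi>) - norm (pair y \<psi>)\<bar> / exp (- real m)"
    unfolding log_pair_trunc_def by (rule ln_max_diff_le) auto
  also have "\<bar>norm (pair x \<psi>) - norm (pair y \<psi>)\<bar> \<le> norm (pair (x - y) \<psi>)"
    unfolding pair_diff by (rule norm_triangle_ineq3)
  also have "\<dots> \<le> N (x - y)"
    using pair_le_dual_norm_N[of "x - y" \<psi>] dual_norm_eq_1[OF assms] by simp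
  finally show ?thesis by (simp add: exp_minus field_simps)
qed

lemma log_pair_trunc_measurable: "log_pair_trunc m x \<in> borel_measurable \<eta>"
  unfolding log_pair_trunc_def by (intro borel_measurable_\<eta>) measurable

lemma integrable_log_pair_trunc:
  assumes "x \<in> S"
  shows "integrable \<eta> (log_pair_trunc m x)"
proof -
  interpret prob_space \<eta> by (rule prob_space_\<eta>)
  show ?thesis
    using log_pair_trunc_bounds[OF assms, of _ m] log_pair_trunc_measurable
    by (intro integrable_const_bound[of _ "real m"] AE_I2) (force simp: abs_le_iff)+
qed

lemma log_integral_trunc_eq: "x \<in> S \<Longrightarrow> log_integral_trunc m x = (\<integral>\<psi>. log_pair_trunc m x \<psi> \<partial>\<eta>)"
  unfolding log_integral_trunc_def
proof (rule integral_cong_AE)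
  assume "x \<in> S"
  then have "AE \<psi> in \<eta>. pair x \<psi> \<noteq> 0" using admissible by (simp add: admissible_def)
  then show "AE \<psi> in \<eta>. max (ln (norm (pair x \<psi>))) (- real m) = log_pair_trunc m x \<psi>"
  proof eventually_elim
    case (elim \<psi>)
    then have "ln (norm (pair x \<psi>)) \<le> - real m \<longleftrightarrow> norm (pair x \<psi>) \<le> exp (- real m)"
      by (subst ln_exp[symmetric, of "- real m"], subst ln_le_cancel_iff) auto
    then show ?case by (auto simp: log_pair_trunc_def max_def)
  qed
qed (auto intro: borel_measurable_\<eta> log_pair_trunc_measurable)

lemma log_integral_trunc_lipschitz:
  assumes "x \<in> S" "y \<in> S"
  shows "\<bar>log_integral_trunc m x - log_integral_trunc m y\<bar> \<le> exp (real m) * N (x - y)"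
proof -
  interpret prob_space \<eta> by (rule prob_space_\<eta>)
  have "\<bar>log_integral_trunc m x - log_integral_trunc m y\<bar>
      = \<bar>\<integral>\<psi>. log_pair_trunc m x \<psi> - log_pair_trunc m y \<psi> \<partial>\<eta>\<bar>"
    using assms by (simp add: log_integral_trunc_eq integrable_log_pair_trunc)
  also have "\<dots> \<le> exp (real m) * N (x - y)"
    using assms log_pair_trunc_lipschitz integrable_log_pair_trunc[OF assms(1)] integrable_log_pair_trunc[OF assms(2)]
    by (intro order_trans[OF integral_abs_bound] integral_le_const AE_I2) auto
  finally show ?thesis .
qed

lemma uniform_limit_log_integral_trunc: "uniform_limit S log_integral_trunc log_integral sequentially"
  using admissible unfolding admissible_def log_integral_trunc_def[abs_def] log_integral_def[abs_def]
  by blast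

lemma continuous_on_log_integral: "continuous_on S log_integral"
proof (rule uniform_limit_theorem)
  show "uniform_limit S log_integral_trunc log_integral sequentially"
    by (rule uniform_limit_log_integral_trunc)
  show "\<forall>\<^sub>F m in sequentially. continuous_on S (log_integral_trunc m)"
  proof (intro always_eventually allI)
    fix m
    obtain A where A: "A > 0" "\<And>x. N x \<le> A * norm x" using N_le_norm by blast
    have "lipschitz_on (exp (real m) * A) S (log_integral_trunc m)"
    proof (rule lipschitz_onI)
      fix x y assume "x \<in> S" "y \<in> S"
      then have "dist (log_integral_trunc m x) (log_integral_trunc m y) \<le> exp (real m) * N (x - y)"
        using log_integral_trunc_lipschitz by (simp add: dist_real_def)
      also have "\<dots> \<le> exp (real m) * (A * dist x y)"
        using A(2)[of "x - y"] by (simp add: dist_norm)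
      finally show "dist (log_integral_trunc m x) (log_integral_trunc m y) \<le> exp (real m) * A * dist x y"
        by (simp add: mult.assoc)
    qed (use A in simp)
    then show "continuous_on S (log_integral_trunc m)" by (rule lipschitz_on_continuous_on)
  qed
qed simp

end

context admissible_dual_measure
begin

lemma exists_samples_log_pair_trunc_le:
  assumes "m \<ge> 1" "\<epsilon> > 0"
  shows "\<exists>k>0. \<exists>\<omega>. (\<forall>i<k. \<omega> i \<in> space \<eta>) \<and>
    (\<forall>x\<in>S. (\<Sum>i<k. log_pair_trunc m x (\<omega> i)) \<le> real k * (log_integral_trunc m x + \<epsilon>))"
proof -
  interpret P: prob_space \<eta> by (rule prob_space_\<eta>)
  obtain A where A: "A > 0" "\<And>x. N x \<le> A * norm x" using N_le_norm by blast
  define \<delta> where "\<delta> = \<epsilon> / (3 * exp (real m) * A)"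
  have \<delta>: "\<delta> > 0" using assms(2) A(1) by (simp add: \<delta>_def)
  have close: "exp (real m) * N (x - y) \<le> \<epsilon> / 3" "exp (real m) * N (y - x) \<le> \<epsilon> / 3"
    if "dist y x < \<delta>" for x y
  proof -
    have "exp (real m) * N (x - y) \<le> exp (real m) * (A * dist y x)"
      using A(2)[of "x - y"] by (simp add: dist_norm norm_minus_commute)
    also have "\<dots> \<le> exp (real m) * (A * \<delta>)" using that A(1) by simp
    also have "\<dots> = \<epsilon> / 3" using A(1) by (simp add: \<delta>_def)
    finally show "exp (real m) * N (x - y) \<le> \<epsilon> / 3" .
    then show "exp (real m) * N (y - x) \<le> \<epsilon> / 3" by (metis N_minus minus_diff_eq)
  qed
  obtain F where F: "F \<subseteq> S" "finite F" "S \<subseteq> (\<Union>y\<in>F. ball y \<delta>)"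
    by (rule compactE_image[OF compact_sphere_N, of S "\<lambda>y. ball y \<delta>"]) (use \<delta> in auto)
  have "F \<noteq> {}" using F(3) sphere_N_nonempty by auto
  have "\<exists>k>0. \<exists>\<omega>. (\<forall>i<k. \<omega> i \<in> space \<eta>) \<and>
      (\<forall>y\<in>F. (\<Sum>i<k. log_pair_trunc m y (\<omega> i)) \<le> real k * (P.expectation (log_pair_trunc m y) + \<epsilon> / 3))"
  proof (rule P.exists_samples_average_le[OF F(2) \<open>F \<noteq> {}\<close> _ _ log_pair_trunc_measurable])
    show "- real m \<le> log_pair_trunc m y z \<and> log_pair_trunc m y z \<le> 0" if "y \<in> F" "z \<in> space \<eta>" for y z
      using that F(1) log_pair_trunc_bounds by blast
  qed (use assms in auto)
  then obtain k \<omega> where k: "k > 0" "\<forall>i<k. \<omega> i \<in> space \<eta>"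
      "\<And>y. y \<in> F \<Longrightarrow> (\<Sum>i<k. log_pair_trunc m y (\<omega> i)) \<le> real k * (log_integral_trunc m y + \<epsilon> / 3)"
    using F(1) log_integral_trunc_eq by (auto simp: subset_iff)
  have "(\<Sum>i<k. log_pair_trunc m x (\<omega> i)) \<le> real k * (log_integral_trunc m x + \<epsilon>)" if x: "x \<in> S" for x
  proof -
    obtain y where y: "y \<in> F" "dist y x < \<delta>" using F(3) x by auto
    have y_S: "y \<in> S" using y(1) F(1) by auto
    have "(\<Sum>i<k. log_pair_trunc m x (\<omega> i)) \<le> (\<Sum>i<k. log_pair_trunc m y (\<omega> i) + \<epsilon> / 3)"
    proof (rule sum_mono)
      fix i assume "i \<in> {..<k}"
      then have "\<bar>log_pair_trunc m x (\<omega> i) - log_pair_trunc m y (\<omega> i)\<bar> \<le> exp (real m) * N (x - y)"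
        using k(2) by (intro log_pair_trunc_lipschitz) auto
      then show "log_pair_trunc m x (\<omega> i) \<le> log_pair_trunc m y (\<omega> i) + \<epsilon> / 3"
        using close(1)[OF y(2)] by linarith
    qed
    also have "\<dots> \<le> real k * (log_integral_trunc m y + \<epsilon> / 3) + real k * (\<epsilon> / 3)"
      using k(3)[OF y(1)] by (simp add: sum.distrib)
    also have "\<dots> \<le> real k * (log_integral_trunc m x + \<epsilon>)"
    proof -
      have "log_integral_trunc m y \<le> log_integral_trunc m x + \<epsilon> / 3"
        using log_integral_trunc_lipschitz[OF y_S x, of m] close(2)[OF y(2)] by linarith
      then have "real k * (log_integral_trunc m y + \<epsilon> / 3 + \<epsilon> / 3) \<le> real k * (log_integral_trunc m x + \<epsilon>)"
        by (intro mult_left_mono) auto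
      then show ?thesis by (simp add: algebra_simps)
    qed
    finally show ?thesis .
  qed
  then show ?thesis using k(1,2) by blast
qed

lemma exists_exp_neg_log_integral_le_c_X: "\<exists>x0\<in>S. exp (- log_integral x0) \<le> c_X N"
proof -
  obtain x0 where x0: "x0 \<in> S" "\<And>y. y \<in> S \<Longrightarrow> log_integral y \<le> log_integral x0"
    using continuous_attains_sup[OF compact_sphere_N sphere_N_nonempty continuous_on_log_integral] by blast
  have "- log_integral x0 \<le> c_exponent + \<epsilon>" if \<epsilon>: "\<epsilon> > 0" for \<epsilon>
  proof -
    have "\<epsilon> / 2 > 0" using \<epsilon> by simp
    then have "\<forall>\<^sub>F m in sequentially. \<forall>x\<in>S. dist (log_integral_trunc m x) (log_integral x) < \<epsilon> / 2"
      using uniform_limit_log_integral_trunc unfolding uniform_limit_iff by blast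
    then obtain m0 where m0: "\<And>m x. m \<ge> m0 \<Longrightarrow> x \<in> S \<Longrightarrow> dist (log_integral_trunc m x) (log_integral x) < \<epsilon> / 2"
      unfolding eventually_sequentially by blast
    define m where "m = max m0 1"
    have m: "m \<ge> 1" "\<And>x. x \<in> S \<Longrightarrow> log_integral_trunc m x \<le> log_integral x + \<epsilon> / 2"
    proof -
      fix x assume "x \<in> S"
      then show "log_integral_trunc m x \<le> log_integral x + \<epsilon> / 2"
        using m0[of m x] unfolding dist_real_def m_def by linarith
    qed (simp add: m_def)
    obtain k \<omega> where k: "k > 0" "\<forall>i<k. \<omega> i \<in> space \<eta>"
        "\<And>x. x \<in> S \<Longrightarrow> (\<Sum>i<k. log_pair_trunc m x (\<omega> i)) \<le> real k * (log_integral_trunc m x + \<epsilon> / 2)"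
      using exists_samples_log_pair_trunc_le[OF m(1), of "\<epsilon> / 2"] \<epsilon> by auto
    have "prod_norm N k \<omega> \<le> exp (real k * (log_integral x0 + \<epsilon>))"
    proof (rule prod_norm_le)
      fix x assume x: "x \<in> S"
      have "norm (\<Prod>i<k. pair x (\<omega> i)) \<le> (\<Prod>i<k. exp (log_pair_trunc m x (\<omega> i)))"
        by (simp add: prod_norm[symmetric] prod_mono norm_pair_le_exp_log_pair_trunc)
      also have "\<dots> = exp (\<Sum>i<k. log_pair_trunc m x (\<omega> i))" by (simp add: exp_sum)
      also have "\<dots> \<le> exp (real k * (log_integral x0 + \<epsilon>))"
        using k(3)[OF x] m(2)[OF x] x0(2)[OF x] by (simp add: order_trans mult_left_mono)
      finally show "norm (\<Prod>i<k. pair x (\<omega> i)) \<le> exp (real k * (log_integral x0 + \<epsilon>))" .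
    qed
    then have "- (log_integral x0 + \<epsilon>) \<le> c_exponent"
      using k(1,2) dual_norm_eq_1 by (intro c_exponent_ge) auto
    then show ?thesis by simp
  qed
  then have "- log_integral x0 \<le> c_exponent" by (rule field_le_epsilon)
  then show ?thesis using x0(1) by (auto simp: c_X_eq_exp_c_exponent)
qed

end

theorem proposition1p4:
  shows "(\<forall>N \<eta>. is_norm (N::real^'n \<Rightarrow> real) \<and> prob_on_dual_sphere N \<eta> \<and> admissible N \<eta>
          \<longrightarrow> (\<exists>x0\<in>sphere_N N. c_X N \<ge> exp (- (\<integral>\<psi>. ln (norm (pair x0 \<psi>)) \<partial>\<eta>))))
       \<and> (\<forall>M \<mu>. is_norm (M::complex^'m \<Rightarrow> real) \<and> prob_on_dual_sphere M \<mu> \<and> admissible M \<mu>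
          \<longrightarrow> (\<exists>y0\<in>sphere_N M. c_X M \<ge> exp (- (\<integral>\<phi>. ln (norm (pair y0 \<phi>)) \<partial>\<mu>))))"
proof (intro conjI allI impI)
  fix N :: "real^'n \<Rightarrow> real" and \<eta>
  assume "is_norm N \<and> prob_on_dual_sphere N \<eta> \<and> admissible N \<eta>"
  then interpret admissible_dual_measure N \<eta>
    by (intro admissible_dual_measure.intro vec_norm_affine.intro vec_norm.intro
        vec_norm_affine_axioms.intro admissible_dual_measure_axioms.intro prod_affine_lower_bound_real) auto
  show "\<exists>x0\<in>sphere_N N. c_X N \<ge> exp (- (\<integral>\<psi>. ln (norm (pair x0 \<psi>)) \<partial>\<eta>))"
    using exists_exp_neg_log_integral_le_c_X by (simp add: log_integral_def)
next
  fix M :: "complex^'m \<Rightarrow> real" and \<mu>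
  assume "is_norm M \<and> prob_on_dual_sphere M \<mu> \<and> admissible M \<mu>"
  then interpret admissible_dual_measure M \<mu>
    by (intro admissible_dual_measure.intro vec_norm_affine.intro vec_norm.intro
        vec_norm_affine_axioms.intro admissible_dual_measure_axioms.intro prod_affine_lower_bound_complex) auto
  show "\<exists>y0\<in>sphere_N M. c_X M \<ge> exp (- (\<integral>\<phi>. ln (norm (pair y0 \<phi>)) \<partial>\<mu>))"
    using exists_exp_neg_log_integral_le_c_X by (simp add: log_integral_def)
qed

end
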